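(* Let $k\ge 1$ be an integer and $p\in[0,1]$. Let $I_1,\dots,I_k$ be independent random variables with $P(I_j=1)=p$, $P(I_j=0)=1-p$. Let $P@i=\frac1i\sum_{j=1}^i I_j$ and $$AP@k=\frac1k\sum_{i=1}^k P@i\cdot I_i.$$ Then $$\operatorname{E}(AP@k)=p\left(p+(1-p)\frac1k H_k\right),$$ where $H_k=\sum_{i=1}^k\frac1i$.
   Context: This is the online evaluation model: each of the top-$k$ recommended items is relevant independently with probability $p$ ($I_j=1$ iff the item at position $j$ is relevant). The expectation is called $MAP_{WR}@k$ in the paper. *)

theory Defs
  imports "HOL-Probability.Probability"
begin

text \<open>Joint law of independent Bernoulli(p) relevance indicators I_1..I_k
  (positions outside 1..k are fixed to False).\<close>
definition relevance_pmf :: "nat \<Rightarrow> real \<Rightarrow> (nat \<Rightarrow> bool) pmf" where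
  "relevance_pmf k p = Pi_pmf {1..k} False (\<lambda>_. bernoulli_pmf p)"

definition prec_at :: "(nat \<Rightarrow> bool) \<Rightarrow> nat \<Rightarrow> real" where
  "prec_at I i = (1 / real i) * (\<Sum>j=1..i. of_bool (I j))"

definition AP_at :: "(nat \<Rightarrow> bool) \<Rightarrow> nat \<Rightarrow> real" where
  "AP_at I k = (1 / real k) * (\<Sum>i=1..k. prec_at I i * of_bool (I i))"

end

theory Submission
  imports Defs
begin

text \<open>By linearity, E(AP@k) is the average over i of (1/i) times the sum over j \<le> i of
  E(I_j I_i), which equals p for j = i and p^2 otherwise by independence. Hence
  E(P@i I_i) = p^2 + (p - p^2)/i, and averaging over i gives the harmonic number.\<close>

lemma finite_set_pmf_relevance_pmf: "finite (set_pmf (relevance_pmf k p))"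
proof -
  have "set_pmf (relevance_pmf k p) = PiE_dflt {1..k} False (\<lambda>_. set_pmf (bernoulli_pmf p))"
    unfolding relevance_pmf_def by (simp add: set_Pi_pmf o_def)
  also have "finite \<dots>"
    by (intro finite_PiE_dflt) auto
  finally show ?thesis .
qed

lemma integrable_relevance_pmf: "integrable (measure_pmf (relevance_pmf k p)) (f :: _ \<Rightarrow> real)"
  by (rule integrable_measure_pmf_finite[OF finite_set_pmf_relevance_pmf])

lemma expectation_prod_relevance_pmf:
  assumes "S \<subseteq> {1..k}" "0 \<le> p" "p \<le> 1"
  shows "measure_pmf.expectation (relevance_pmf k p) (\<lambda>I. \<Prod>j\<in>S. of_bool (I j)) = p ^ card S"
proof -
  have "(\<lambda>I. \<Prod>j\<in>S. of_bool (I j) :: real)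
      = (\<lambda>I. \<Prod>j\<in>{1..k}. (\<lambda>j v. if j \<in> S then of_bool v else 1) j (I j))"
    using assms(1) by (simp add: prod.inter_restrict[symmetric] Int_absorb1)
  then have "measure_pmf.expectation (relevance_pmf k p) (\<lambda>I. \<Prod>j\<in>S. of_bool (I j))
      = measure_pmf.expectation (relevance_pmf k p)
          (\<lambda>I. \<Prod>j\<in>{1..k}. (\<lambda>j v. if j \<in> S then of_bool v else 1 :: real) j (I j))"
    by (simp only:)
    \<comment> \<open>the beta-redex is kept so that the integrand has the shape required by expectation_prod_Pi_pmf\<close>
  also have "\<dots> = (\<Prod>j\<in>{1..k}. measure_pmf.expectation (bernoulli_pmf p)
                     (\<lambda>v. if j \<in> S then of_bool v else 1))"
    unfolding relevance_pmf_def
    by (rule expectation_prod_Pi_pmf) (auto intro: integrable_measure_pmf_finite)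
  also have "\<dots> = (\<Prod>j\<in>{1..k}. if j \<in> S then p else 1)"
    using assms(2,3) by (intro prod.cong) auto
  also have "\<dots> = p ^ card S"
    using assms(1) by (simp add: prod.inter_restrict[symmetric] Int_absorb1)
  finally show ?thesis .
qed

lemma expectation_relevant_pair:
  assumes "i \<in> {1..k}" "j \<in> {1..k}" "0 \<le> p" "p \<le> 1"
  shows "measure_pmf.expectation (relevance_pmf k p) (\<lambda>I. of_bool (I j) * of_bool (I i))
         = (if j = i then p else p^2)"
proof -
  have "(\<lambda>I. of_bool (I j) * of_bool (I i) :: real) = (\<lambda>I. \<Prod>l\<in>{i, j}. of_bool (I l))"
    by (cases "j = i") auto
  then show ?thesis
    using expectation_prod_relevance_pmf[of "{i, j}" k p] assms by (auto simp: power2_eq_square)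
qed

lemma expectation_prec_at_relevant:
  assumes "i \<in> {1..k}" "0 \<le> p" "p \<le> 1"
  shows "measure_pmf.expectation (relevance_pmf k p) (\<lambda>I. prec_at I i * of_bool (I i))
         = p^2 + (p - p^2) / real i"
proof -
  have "measure_pmf.expectation (relevance_pmf k p) (\<lambda>I. prec_at I i * of_bool (I i))
      = (1 / real i) * (\<Sum>j=1..i. measure_pmf.expectation (relevance_pmf k p)
                                   (\<lambda>I. of_bool (I j) * of_bool (I i)))"
    unfolding prec_at_def sum_distrib_right mult.assoc
    by (simp only: integral_mult_right_zero Bochner_Integration.integral_sum[OF integrable_relevance_pmf])
  also have "(\<Sum>j=1..i. measure_pmf.expectation (relevance_pmf k p)
                         (\<lambda>I. of_bool (I j) * of_bool (I i)))
           = (\<Sum>j=1..i. p^2 + (if j = i then p - p^2 else 0))"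
    using assms by (intro sum.cong refl) (auto simp: expectation_relevant_pair)
  also have "\<dots> = real i * p^2 + (p - p^2)"
    using assms(1) by (simp add: sum.distrib)
  finally show ?thesis
    using assms(1) by (simp add: field_simps)
qed

theorem theorem3:
  fixes k :: nat and p :: real
  assumes "k \<ge> 1" and "0 \<le> p" and "p \<le> 1"
  shows "measure_pmf.expectation (relevance_pmf k p) (\<lambda>I. AP_at I k)
           = p * (p + (1 - p) * (1 / real k) * (\<Sum>i=1..k. 1 / real i))"
proof -
  have "measure_pmf.expectation (relevance_pmf k p) (\<lambda>I. AP_at I k)
      = (1 / real k) * (\<Sum>i=1..k. measure_pmf.expectation (relevance_pmf k p)
                                   (\<lambda>I. prec_at I i * of_bool (I i)))"
    unfolding AP_at_def
    by (simp only: integral_mult_right_zero Bochner_Integration.integral_sum[OF integrable_relevance_pmf])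
  also have "\<dots> = (1 / real k) * (\<Sum>i=1..k. p^2 + (p - p^2) / real i)"
    using assms by (simp add: expectation_prec_at_relevant)
  also have "\<dots> = (1 / real k) * (real k * p^2 + (p - p^2) * (\<Sum>i=1..k. 1 / real i))"
    by (simp add: sum.distrib sum_distrib_left)
  finally show ?thesis
    using assms(1) by (simp add: field_simps power2_eq_square)
qed

end
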